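(* Let $\alpha\in\ell^2$. For every $p\in(1,\infty)$ there exists a constant $C_p>0$ depending only on $p$ such that $$\|(a_k(R_\alpha))_{k\ge1}\|_{\ell^p}\le C_p\Big(\sum_{k\ge-1}|\sigma_k|^p\Big)^{1/p}.$$
   Context: $\mathbb{N}=\{0,1,2,\dots\}$; $(R_\alpha f)(k)=\alpha_k\sum_{j=0}^kf(j)$ on $\ell^2$ (square-summable functions $\mathbb{N}\to\mathbb{C}$). $\sigma_{-1}=|\alpha_0|$ and $\sigma_k=(\sum_{j=2^k}^{2^{k+1}-1}(j+1)|\alpha_j|^2)^{1/2}$ for $k\in\mathbb{N}$. Approximation numbers: $a_{n+1}(T)=\inf\{\|T-P\|:P$ linear with rank $\le n\}$, $n\ge0$. *)

theory Defs
  imports "HOL-Analysis.Analysis"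
begin

definition l2 :: "(nat \<Rightarrow> complex) set" where
  "l2 = {f. summable (\<lambda>k. (cmod (f k))\<^sup>2)}"

definition l2norm :: "(nat \<Rightarrow> complex) \<Rightarrow> ereal" where
  "l2norm f = (if f \<in> l2 then ereal (sqrt (\<Sum>k. (cmod (f k))\<^sup>2)) else \<infinity>)"

definition opnorm :: "((nat \<Rightarrow> complex) \<Rightarrow> (nat \<Rightarrow> complex)) \<Rightarrow> ereal" where
  "opnorm T = (SUP f\<in>{f\<in>l2. l2norm f \<le> 1}. l2norm (T f))"

definition lin_rank_le :: "nat \<Rightarrow> ((nat \<Rightarrow> complex) \<Rightarrow> (nat \<Rightarrow> complex)) \<Rightarrow> bool" where
  "lin_rank_le n P \<longleftrightarrow>
     (\<forall>f\<in>l2. P f \<in> l2) \<and>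
     (\<forall>f\<in>l2. \<forall>g\<in>l2. \<forall>a b::complex.
        P (\<lambda>k. a * f k + b * g k) = (\<lambda>k. a * P f k + b * P g k)) \<and>
     (\<exists>v::nat \<Rightarrow> nat \<Rightarrow> complex. \<forall>f\<in>l2. \<exists>c::nat \<Rightarrow> complex.
        P f = (\<lambda>k. \<Sum>i<n. c i * v i k))"

text \<open>approx_num T n is the approximation number a_(n+1)(T), n >= 0.\<close>
definition approx_num :: "((nat \<Rightarrow> complex) \<Rightarrow> (nat \<Rightarrow> complex)) \<Rightarrow> nat \<Rightarrow> ereal" where
  "approx_num T n = (INF P\<in>{P. lin_rank_le n P}. opnorm (\<lambda>f k. T f k - P f k))"

definition R_op :: "(nat \<Rightarrow> complex) \<Rightarrow> (nat \<Rightarrow> complex) \<Rightarrow> (nat \<Rightarrow> complex)" where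
  "R_op \<alpha> f = (\<lambda>k. \<alpha> k * (\<Sum>j\<le>k. f j))"

text \<open>sig alpha m = sigma_(m-1): sig alpha 0 = sigma_(-1) = |alpha_0|, sig alpha (Suc k) = sigma_k.\<close>
fun sig :: "(nat \<Rightarrow> complex) \<Rightarrow> nat \<Rightarrow> real" where
  "sig \<alpha> 0 = cmod (\<alpha> 0)"
| "sig \<alpha> (Suc k) = sqrt (\<Sum>j\<in>{2^k..<2^(k+1)}. real (j+1) * (cmod (\<alpha> j))\<^sup>2)"

end

theory Submission
  imports Defs
begin

text \<open>Fix a level \<open>t > 0\<close> and call the dyadic block \<open>i\<close> heavy if \<open>sig \<alpha> i > t / 4\<close>. Each heavy
  block is cut into at most \<open>\<lfloor>4 sig \<alpha> i / t\<rfloor> + 1\<close> cells, each carrying only a fraction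
  \<open>t / sig \<alpha> i\<close> of the \<open>\<alpha>\<close>-mass and of the length of the block. Replacing the partial sum
  \<open>\<Sum>j\<le>k. f j\<close> in row \<open>k\<close> of \<open>R_op \<alpha>\<close> by the sum up to the start of the cell of \<open>k\<close>, and by
  \<open>0\<close> in light blocks, gives an operator of rank at most \<open>N(t) = \<Sum>\<^bsub>heavy i\<^esub> (\<lfloor>4 sig \<alpha> i / t\<rfloor> + 1)\<close>.
  A Schur test with weights \<open>1 / sqrt (j + 1)\<close> bounds the error by \<open>2 t\<close>: cells are short and
  light, and over the light blocks \<open>sig \<alpha> i \<le> t / 4\<close> the weights decay geometrically. So
  \<open>a\<^sub>n\<^sub>+\<^sub>1 \<le> 2 t\<close> once \<open>n \<ge> N(t)\<close>, and summing over the levels \<open>t = c / 2^j\<close> bounds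
  \<open>\<Sum>n. a\<^sub>n ^ p\<close> by a multiple of \<open>\<Sum>\<^sub>j N(c / 2^j) (c / 2^j)^p\<close>, which is a geometric
  series in each block and hence at most a constant times \<open>\<Sum>i. sig \<alpha> i ^ p\<close>.\<close>

section \<open>Finite-rank truncations of \<open>R_op\<close>\<close>

lemma l2norm_nonneg: "0 \<le> l2norm f"
  by (auto simp: l2norm_def l2_def intro!: suminf_nonneg)

lemma opnorm_nonneg: "0 \<le> opnorm T"
proof -
  have "(\<lambda>k. 0) \<in> {f\<in>l2. l2norm f \<le> 1}"
    by (simp add: l2norm_def l2_def)
  then show ?thesis
    unfolding opnorm_def by (rule SUP_upper2) (rule l2norm_nonneg)
qed

lemma approx_num_nonneg: "0 \<le> approx_num T n"
  unfolding approx_num_def by (rule INF_greatest) (rule opnorm_nonneg)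

lemma approx_num_le_opnorm:
  "lin_rank_le n P \<Longrightarrow> approx_num T n \<le> opnorm (\<lambda>f k. T f k - P f k)"
  unfolding approx_num_def by (rule INF_lower) simp

lemma opnorm_le:
  assumes "0 \<le> B"
    and "\<And>f. f \<in> l2 \<Longrightarrow> (\<Sum>k. (cmod (f k))\<^sup>2) \<le> 1 \<Longrightarrow>
           T f \<in> l2 \<and> (\<Sum>k. (cmod (T f k))\<^sup>2) \<le> B\<^sup>2"
  shows "opnorm T \<le> ereal B"
  unfolding opnorm_def
proof (rule SUP_least)
  fix f assume "f \<in> {f\<in>l2. l2norm f \<le> 1}"
  then have f: "f \<in> l2" and "sqrt (\<Sum>k. (cmod (f k))\<^sup>2) \<le> 1"
    by (auto simp: l2norm_def)
  then have "(\<Sum>k. (cmod (f k))\<^sup>2) \<le> 1" by simp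
  with assms(2)[OF f] have "T f \<in> l2" "(\<Sum>k. (cmod (T f k))\<^sup>2) \<le> B\<^sup>2" by auto
  with assms(1) show "l2norm (T f) \<le> ereal B"
    by (simp add: l2norm_def real_le_lsqrt)
qed

definition R_cut ::
  "(nat \<Rightarrow> complex) \<Rightarrow> (nat \<Rightarrow> nat) \<Rightarrow> (nat \<Rightarrow> complex) \<Rightarrow> nat \<Rightarrow> complex" where
  "R_cut \<alpha> g f = (\<lambda>k. \<alpha> k * (\<Sum>j<g k. f j))"

lemma R_op_minus_R_cut:
  assumes "g k \<le> Suc k"
  shows "R_op \<alpha> f k - R_cut \<alpha> g f k = \<alpha> k * (\<Sum>j\<in>{g k..k}. f j)"
proof -
  have "{..k} = {..<g k} \<union> {g k..k}" using assms by auto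
  then have "(\<Sum>j\<le>k. f j) = (\<Sum>j<g k. f j) + (\<Sum>j\<in>{g k..k}. f j)"
    by (simp add: sum.union_disjoint ivl_disj_int)
  then show ?thesis
    by (simp add: R_op_def R_cut_def algebra_simps)
qed

lemma R_cut_in_l2:
  assumes "\<alpha> \<in> l2" and "finite (range g)"
  shows "R_cut \<alpha> g f \<in> l2"
proof -
  define M where "M = Max ((\<lambda>v. cmod (\<Sum>j<v. f j)) ` range g)"
  have "cmod (\<Sum>j<g k. f j) \<le> M" for k
    unfolding M_def using assms(2) by (intro Max_ge) auto
  then have "cmod (R_cut \<alpha> g f k) \<le> cmod (\<alpha> k) * M" for k
    by (simp add: R_cut_def norm_mult mult_left_mono)
  then have "(cmod (R_cut \<alpha> g f k))\<^sup>2 \<le> (cmod (\<alpha> k) * M)\<^sup>2" for k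
    by (rule power_mono) simp
  then have bound: "(cmod (R_cut \<alpha> g f k))\<^sup>2 \<le> M\<^sup>2 * (cmod (\<alpha> k))\<^sup>2" for k
    by (simp add: power_mult_distrib mult.commute)
  have "summable (\<lambda>k. M\<^sup>2 * (cmod (\<alpha> k))\<^sup>2)"
    using assms(1) by (intro summable_mult) (simp add: l2_def)
  then show ?thesis
    unfolding l2_def mem_Collect_eq
    by (rule summable_comparison_test') (simp add: bound)
qed

lemma R_cut_range_representation:
  assumes "finite (range g)" and "card (range g - {0}) \<le> n"
  shows "\<exists>v. \<forall>f. \<exists>c. R_cut \<alpha> g f = (\<lambda>k. \<Sum>i<n. c i * v i k)"
proof -
  define W where "W = range g - {0}"
  obtain e where e: "bij_betw e {..<card W} W"
    using ex_bij_betw_nat_finite[of W] assms(1) by (auto simp: W_def atLeast0LessThan)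
  define v where "v i k = (if i < card W \<and> g k = e i then \<alpha> k else 0)" for i k
  have "R_cut \<alpha> g f k = (\<Sum>i<n. (\<Sum>j<e i. f j) * v i k)" for f k
  proof (cases "g k = 0")
    case True
    then have "v i k = 0" for i
      using e by (auto simp: v_def W_def bij_betw_def)
    with True show ?thesis by (simp add: R_cut_def)
  next
    case False
    then have "g k \<in> W" by (simp add: W_def)
    then obtain i0 where i0: "i0 < card W" "e i0 = g k"
      using e unfolding bij_betw_def by (metis imageE lessThan_iff)
    have "i < card W \<and> g k = e i \<longleftrightarrow> i = i0" for i
      using e i0 unfolding bij_betw_def inj_on_def by auto
    then have "(\<Sum>i<n. (\<Sum>j<e i. f j) * v i k) = (\<Sum>i<n. if i = i0 then (\<Sum>j<e i. f j) * \<alpha> k else 0)"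
      by (intro sum.cong) (auto simp: v_def)
    also have "\<dots> = (\<Sum>j<g k. f j) * \<alpha> k"
      using i0 assms(2) by (simp add: W_def)
    finally show ?thesis by (simp add: R_cut_def mult.commute)
  qed
  then show ?thesis by (intro exI[of _ v] allI exI[of _ "\<lambda>i. \<Sum>j<e i. _ j"]) auto
qed

lemma lin_rank_le_R_cut:
  assumes "\<alpha> \<in> l2" and "finite (range g)" and "card (range g - {0}) \<le> n"
  shows "lin_rank_le n (R_cut \<alpha> g)"
proof -
  have "R_cut \<alpha> g (\<lambda>k. a * f k + b * h k) = (\<lambda>k. a * R_cut \<alpha> g f k + b * R_cut \<alpha> g h k)"
    for a b f h
    by (simp add: R_cut_def sum.distrib sum_distrib_left fun_eq_iff algebra_simps)
  then show ?thesis
    unfolding lin_rank_le_def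
    using R_cut_in_l2[OF assms(1,2)] R_cut_range_representation[OF assms(2,3), of \<alpha>] by blast
qed

section \<open>A weighted Schur test\<close>

lemma norm_sum_squared_le_weighted:
  fixes f :: "'a \<Rightarrow> 'b::real_normed_vector"
  assumes "\<And>j. j \<in> S \<Longrightarrow> 0 < w j"
  shows "(norm (\<Sum>j\<in>S. f j))\<^sup>2 \<le> (\<Sum>j\<in>S. w j) * (\<Sum>j\<in>S. (norm (f j))\<^sup>2 / w j)"
proof -
  have eq: "(\<Sum>j\<in>S. norm (f j)) = (\<Sum>j\<in>S. sqrt (w j) * (norm (f j) / sqrt (w j)))"
  proof (intro sum.cong refl)
    fix j assume "j \<in> S"
    with assms have "0 < w j" by blast
    then show "norm (f j) = sqrt (w j) * (norm (f j) / sqrt (w j))" by simp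
  qed
  have "(norm (\<Sum>j\<in>S. f j))\<^sup>2 \<le> (\<Sum>j\<in>S. norm (f j))\<^sup>2"
    by (intro power_mono norm_sum) simp
  also have "\<dots> \<le> (\<Sum>j\<in>S. (sqrt (w j))\<^sup>2) * (\<Sum>j\<in>S. (norm (f j) / sqrt (w j))\<^sup>2)"
    unfolding eq by (rule Cauchy_Schwarz_ineq_sum)
  also have "\<dots> = (\<Sum>j\<in>S. w j) * (\<Sum>j\<in>S. (norm (f j))\<^sup>2 / w j)"
    using assms by (intro arg_cong2[where f = "(*)"] sum.cong) (auto simp: power_divide less_imp_le)
  finally show ?thesis .
qed

lemma schur_test_partial:
  fixes \<alpha> f :: "nat \<Rightarrow> complex" and g :: "nat \<Rightarrow> nat" and w :: "nat \<Rightarrow> real"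
  assumes w: "\<And>j. 0 < w j"
    and H: "\<And>j. (\<Sum>k | k < K \<and> g k \<le> j \<and> j \<le> k. (cmod (\<alpha> k))\<^sup>2 * (\<Sum>i\<in>{g k..k}. w i)) \<le> D * w j"
  shows "(\<Sum>k<K. (cmod (\<alpha> k * (\<Sum>j\<in>{g k..k}. f j)))\<^sup>2) \<le> D * (\<Sum>j<K. (cmod (f j))\<^sup>2)"
proof -
  define F where "F k j = (cmod (\<alpha> k))\<^sup>2 * (\<Sum>i\<in>{g k..k}. w i) * ((cmod (f j))\<^sup>2 / w j)" for k j
  have "(cmod (\<alpha> k * (\<Sum>j\<in>{g k..k}. f j)))\<^sup>2 \<le> (\<Sum>j\<in>{g k..k}. F k j)" for k
  proof -
    have "(cmod (\<Sum>j\<in>{g k..k}. f j))\<^sup>2 \<le> (\<Sum>i\<in>{g k..k}. w i) * (\<Sum>j\<in>{g k..k}. (cmod (f j))\<^sup>2 / w j)"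
      using w by (intro norm_sum_squared_le_weighted)
    then have "(cmod (\<alpha> k))\<^sup>2 * (cmod (\<Sum>j\<in>{g k..k}. f j))\<^sup>2
        \<le> (cmod (\<alpha> k))\<^sup>2 * ((\<Sum>i\<in>{g k..k}. w i) * (\<Sum>j\<in>{g k..k}. (cmod (f j))\<^sup>2 / w j))"
      by (rule mult_left_mono) simp
    then show ?thesis
      unfolding F_def sum_distrib_left[symmetric] by (simp add: norm_mult power_mult_distrib mult.assoc)
  qed
  then have "(\<Sum>k<K. (cmod (\<alpha> k * (\<Sum>j\<in>{g k..k}. f j)))\<^sup>2) \<le> (\<Sum>k<K. \<Sum>j\<in>{g k..k}. F k j)"
    by (rule sum_mono)
  also have "\<dots> = (\<Sum>k<K. \<Sum>j\<in>{j. j \<in> {..<K} \<and> g k \<le> j \<and> j \<le> k}. F k j)"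
    by (intro sum.cong refl) auto
  also have "\<dots> = (\<Sum>j<K. \<Sum>k\<in>{k. k \<in> {..<K} \<and> g k \<le> j \<and> j \<le> k}. F k j)"
    by (rule sum.swap_restrict) auto
  also have "\<dots> = (\<Sum>j<K. (cmod (f j))\<^sup>2 / w j *
      (\<Sum>k | k < K \<and> g k \<le> j \<and> j \<le> k. (cmod (\<alpha> k))\<^sup>2 * (\<Sum>i\<in>{g k..k}. w i)))"
    by (simp add: F_def sum_distrib_left mult_ac)
  also have "\<dots> \<le> (\<Sum>j<K. (cmod (f j))\<^sup>2 / w j * (D * w j))"
    using w by (intro sum_mono mult_left_mono H) (auto simp: less_imp_le)
  also have "\<dots> = D * (\<Sum>j<K. (cmod (f j))\<^sup>2)"
    using w by (simp add: sum_distrib_left less_imp_neq[symmetric] mult.commute)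
  finally show ?thesis .
qed

lemma opnorm_R_op_minus_R_cut_le:
  fixes \<alpha> :: "nat \<Rightarrow> complex" and g :: "nat \<Rightarrow> nat" and w :: "nat \<Rightarrow> real"
  assumes g: "\<And>k. g k \<le> Suc k" and w: "\<And>j. 0 < w j"
    and H: "\<And>j K. (\<Sum>k | k < K \<and> g k \<le> j \<and> j \<le> k. (cmod (\<alpha> k))\<^sup>2 * (\<Sum>i\<in>{g k..k}. w i)) \<le> D * w j"
  shows "opnorm (\<lambda>f k. R_op \<alpha> f k - R_cut \<alpha> g f k) \<le> ereal (sqrt D)"
proof -
  have "0 \<le> D * w 0" using H[of 0 0] by simp
  then have D: "0 \<le> D" using w[of 0] by (simp add: zero_le_mult_iff)
  show ?thesis
  proof (rule opnorm_le)
    show "0 \<le> sqrt D" using D by simp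
    fix f assume f: "f \<in> l2" and f1: "(\<Sum>k. (cmod (f k))\<^sup>2) \<le> 1"
    define e where "e k = (cmod (\<alpha> k * (\<Sum>j\<in>{g k..k}. f j)))\<^sup>2" for k
    have partial: "(\<Sum>k<K. e k) \<le> D" for K
    proof -
      have "(\<Sum>k<K. e k) \<le> D * (\<Sum>j<K. (cmod (f j))\<^sup>2)"
        unfolding e_def by (rule schur_test_partial[OF w H])
      also have "\<dots> \<le> D * 1"
        using f f1 D by (intro mult_left_mono order.trans[OF sum_le_suminf]) (auto simp: l2_def)
      finally show ?thesis by simp
    qed
    then have "summable e"
      by (intro summableI_nonneg_bounded) (auto simp: e_def)
    moreover have "R_op \<alpha> f k - R_cut \<alpha> g f k = \<alpha> k * (\<Sum>j\<in>{g k..k}. f j)" for k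
      using R_op_minus_R_cut g by blast
    ultimately show "(\<lambda>k. R_op \<alpha> f k - R_cut \<alpha> g f k) \<in> l2 \<and>
        (\<Sum>k. (cmod (R_op \<alpha> f k - R_cut \<alpha> g f k))\<^sup>2) \<le> (sqrt D)\<^sup>2"
      using partial D unfolding e_def by (simp add: l2_def suminf_le_const)
  qed
qed

section \<open>Dyadic blocks\<close>

text \<open>\<open>dyadic_block 0 = {0}\<close> and \<open>dyadic_block (Suc i) = {2^i..<2^(i+1)}\<close>: the index
  ranges of \<open>sig \<alpha> 0\<close> and \<open>sig \<alpha> (Suc i)\<close>.\<close>

definition dyadic_start :: "nat \<Rightarrow> nat" where
  "dyadic_start i = 2 ^ i div 2"

definition dyadic_block :: "nat \<Rightarrow> nat set" where
  "dyadic_block i = {dyadic_start i..<2 ^ i}"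

definition dyadic_index :: "nat \<Rightarrow> nat" where
  "dyadic_index k = (LEAST i. k < 2 ^ i)"

lemma dyadic_start_0 [simp]: "dyadic_start 0 = 0"
  by (simp add: dyadic_start_def)

lemma dyadic_start_Suc [simp]: "dyadic_start (Suc i) = 2 ^ i"
  by (simp add: dyadic_start_def)

lemma dyadic_start_less: "dyadic_start i < 2 ^ i"
  by (cases i) auto

lemma two_pow_le_dyadic_start: "2 ^ i \<le> 2 * (dyadic_start i + 1)"
  by (cases i) auto

lemma dyadic_length_le: "2 ^ i - dyadic_start i \<le> dyadic_start i + 1"
  by (cases i) auto

lemma finite_dyadic_block [simp]: "finite (dyadic_block i)"
  by (simp add: dyadic_block_def)

lemma dyadic_index_less: "k < 2 ^ dyadic_index k"
  unfolding dyadic_index_def by (rule LeastI[of _ k]) (rule less_exp)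

lemma dyadic_index_le: "k < 2 ^ i \<Longrightarrow> dyadic_index k \<le> i"
  unfolding dyadic_index_def by (rule Least_le)

lemma dyadic_index_mem: "k \<in> dyadic_block (dyadic_index k)"
proof (cases "dyadic_index k")
  case 0
  then show ?thesis using dyadic_index_less[of k] by (simp add: dyadic_block_def)
next
  case (Suc m)
  then have "\<not> k < 2 ^ m"
    unfolding dyadic_index_def by (metis lessI not_less_Least)
  then show ?thesis using dyadic_index_less[of k] Suc by (simp add: dyadic_block_def)
qed

lemma dyadic_index_eqI:
  assumes "k \<in> dyadic_block i"
  shows "dyadic_index k = i"
proof (rule antisym)
  show "dyadic_index k \<le> i"
    using assms by (intro dyadic_index_le) (simp add: dyadic_block_def)
  show "i \<le> dyadic_index k"
  proof (cases i)
    case (Suc m)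
    with assms have "\<not> k < 2 ^ m" by (simp add: dyadic_block_def)
    moreover have "k < 2 ^ m" if "dyadic_index k \<le> m"
      by (rule order.strict_trans2[OF dyadic_index_less power_increasing[OF that]]) simp
    ultimately show ?thesis using Suc by linarith
  qed simp
qed

lemma dyadic_index_mono: "k \<le> k' \<Longrightarrow> dyadic_index k \<le> dyadic_index k'"
  using dyadic_index_le dyadic_index_less by (meson le_less_trans)

lemma sig_squared: "(sig \<alpha> i)\<^sup>2 = (\<Sum>k\<in>dyadic_block i. real (k + 1) * (cmod (\<alpha> k))\<^sup>2)"
  by (cases i) (simp_all add: dyadic_block_def sum_nonneg)

lemma sig_nonneg: "0 \<le> sig \<alpha> i"
  by (cases i) (simp_all add: sum_nonneg)

section \<open>Cells and anchors at level \<open>t\<close>\<close>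

definition block_mass :: "(nat \<Rightarrow> complex) \<Rightarrow> nat \<Rightarrow> real" where
  "block_mass \<alpha> i = (\<Sum>k\<in>dyadic_block i. (cmod (\<alpha> k))\<^sup>2)"

definition mass_below :: "(nat \<Rightarrow> complex) \<Rightarrow> nat \<Rightarrow> nat \<Rightarrow> real" where
  "mass_below \<alpha> i k = (\<Sum>l\<in>{dyadic_start i..<k}. (cmod (\<alpha> l))\<^sup>2)"

definition block_length :: "nat \<Rightarrow> real" where
  "block_length i = real (2 ^ i - dyadic_start i)"

text \<open>Across a block, \<open>cell_coord\<close> rises from \<open>0\<close> to \<open>2 * sig \<alpha> i / t\<close>; a stretch on which it
  rises by less than \<open>1\<close> carries \<open>\<alpha>\<close>-mass below \<open>t * block_mass \<alpha> i / sig \<alpha> i\<close> and has length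
  below \<open>t * block_length i / sig \<alpha> i\<close>.\<close>

definition cell_coord :: "(nat \<Rightarrow> complex) \<Rightarrow> real \<Rightarrow> nat \<Rightarrow> nat \<Rightarrow> real" where
  "cell_coord \<alpha> t i k =
     (mass_below \<alpha> i k / block_mass \<alpha> i + (real k - real (dyadic_start i)) / block_length i)
       * sig \<alpha> i / t"

definition cell_floor :: "(nat \<Rightarrow> complex) \<Rightarrow> real \<Rightarrow> nat \<Rightarrow> nat \<Rightarrow> int" where
  "cell_floor \<alpha> t i k = \<lfloor>cell_coord \<alpha> t i k\<rfloor>"

definition cell_key :: "(nat \<Rightarrow> complex) \<Rightarrow> real \<Rightarrow> nat \<Rightarrow> nat \<Rightarrow> int" where
  "cell_key \<alpha> t i k = cell_floor \<alpha> t i k + cell_floor \<alpha> t i (Suc k)"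

definition heavy :: "(nat \<Rightarrow> complex) \<Rightarrow> real \<Rightarrow> nat \<Rightarrow> bool" where
  "heavy \<alpha> t i \<longleftrightarrow> t < 4 * sig \<alpha> i"

text \<open>Away from jumps of
  \<open>cell_floor\<close>, the anchor is the first point of the level set of \<open>cell_key\<close> containing \<open>k\<close>, on
  which \<open>cell_floor\<close> is constant up to one step past \<open>k\<close>; so anchors are counted by the values
  of \<open>cell_key\<close>.\<close>

definition anchor :: "(nat \<Rightarrow> complex) \<Rightarrow> real \<Rightarrow> nat \<Rightarrow> nat" where
  "anchor \<alpha> t k =
     (let i = dyadic_index k in
      if \<not> heavy \<alpha> t i then 0
      else if cell_floor \<alpha> t i k \<noteq> cell_floor \<alpha> t i (Suc k) then Suc k
      else (LEAST l. l \<in> dyadic_block i \<and> cell_key \<alpha> t i l = cell_key \<alpha> t i k))"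

definition anchor_count :: "(nat \<Rightarrow> complex) \<Rightarrow> real \<Rightarrow> nat" where
  "anchor_count \<alpha> t = (\<Sum>i | heavy \<alpha> t i. nat (\<lfloor>4 * sig \<alpha> i / t\<rfloor> + 1))"

lemma block_length_pos: "0 < block_length i"
  using dyadic_start_less[of i] by (simp add: block_length_def)

lemma block_length_le: "block_length i \<le> real (dyadic_start i) + 1"
  using dyadic_length_le[of i] unfolding block_length_def by linarith

lemma mass_below_mono: "k \<le> k' \<Longrightarrow> mass_below \<alpha> i k \<le> mass_below \<alpha> i k'"
  unfolding mass_below_def by (rule sum_mono2) auto

lemma mass_below_diff:
  "dyadic_start i \<le> a \<Longrightarrow> a \<le> b \<Longrightarrow>
    mass_below \<alpha> i b - mass_below \<alpha> i a = (\<Sum>l\<in>{a..<b}. (cmod (\<alpha> l))\<^sup>2)"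
  unfolding mass_below_def
  using sum.atLeastLessThan_concat[of "dyadic_start i" a b "\<lambda>l. (cmod (\<alpha> l))\<^sup>2"] by simp

lemma block_length_mass_le_sig: "block_length i * block_mass \<alpha> i \<le> (sig \<alpha> i)\<^sup>2"
  unfolding block_mass_def sig_squared sum_distrib_left
proof (rule sum_mono)
  fix k assume "k \<in> dyadic_block i"
  then have "block_length i \<le> real (k + 1)"
    using block_length_le[of i] by (simp add: dyadic_block_def)
  then show "block_length i * (cmod (\<alpha> k))\<^sup>2 \<le> real (k + 1) * (cmod (\<alpha> k))\<^sup>2"
    by (rule mult_right_mono) simp
qed

lemma block_mass_pos:
  assumes "0 < sig \<alpha> i"
  shows "0 < block_mass \<alpha> i"
proof -
  have "(sig \<alpha> i)\<^sup>2 \<le> (\<Sum>k\<in>dyadic_block i. 2 ^ i * (cmod (\<alpha> k))\<^sup>2)"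
    unfolding sig_squared
  proof (rule sum_mono)
    fix k assume "k \<in> dyadic_block i"
    then have "real (k + 1) \<le> real (2 ^ i)"
      by (simp only: of_nat_le_iff) (simp add: dyadic_block_def)
    then have "real (k + 1) \<le> 2 ^ i" by simp
    then show "real (k + 1) * (cmod (\<alpha> k))\<^sup>2 \<le> 2 ^ i * (cmod (\<alpha> k))\<^sup>2"
      by (rule mult_right_mono) simp
  qed
  moreover have "0 < (sig \<alpha> i)\<^sup>2" using assms by simp
  ultimately have "0 < (\<Sum>k\<in>dyadic_block i. 2 ^ i * (cmod (\<alpha> k))\<^sup>2)" by linarith
  then have "0 < 2 ^ i * block_mass \<alpha> i"
    by (simp add: block_mass_def sum_distrib_left)
  then show ?thesis by (simp add: zero_less_mult_iff)
qed

lemma heavy_sig_pos: "0 < t \<Longrightarrow> heavy \<alpha> t i \<Longrightarrow> 0 < sig \<alpha> i"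
  unfolding heavy_def by linarith

lemma cell_coord_mono:
  assumes "0 < t" and "k \<le> k'"
  shows "cell_coord \<alpha> t i k \<le> cell_coord \<alpha> t i k'"
proof -
  have "0 \<le> block_mass \<alpha> i" by (simp add: block_mass_def sum_nonneg)
  then have "mass_below \<alpha> i k / block_mass \<alpha> i + (real k - real (dyadic_start i)) / block_length i
      \<le> mass_below \<alpha> i k' / block_mass \<alpha> i + (real k' - real (dyadic_start i)) / block_length i"
    using mass_below_mono[OF assms(2)] block_length_pos[of i] assms(2)
    by (intro add_mono divide_right_mono) auto
  then show ?thesis
    unfolding cell_coord_def using assms(1) sig_nonneg[of \<alpha> i]
    by (intro divide_right_mono mult_right_mono) auto
qed

lemma cell_floor_mono: "0 < t \<Longrightarrow> k \<le> k' \<Longrightarrow> cell_floor \<alpha> t i k \<le> cell_floor \<alpha> t i k'"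
  unfolding cell_floor_def by (intro floor_mono cell_coord_mono)

lemma cell_floor_eq_if_cell_key_eq:
  assumes "0 < t" and "l < k" and "cell_key \<alpha> t i l = cell_key \<alpha> t i k"
  shows "cell_floor \<alpha> t i l = cell_floor \<alpha> t i (Suc l)"
    and "cell_floor \<alpha> t i l = cell_floor \<alpha> t i (Suc k)"
    and "cell_floor \<alpha> t i k = cell_floor \<alpha> t i (Suc k)"
proof -
  have "cell_floor \<alpha> t i l \<le> cell_floor \<alpha> t i (Suc l)"
    and "cell_floor \<alpha> t i (Suc l) \<le> cell_floor \<alpha> t i k"
    and "cell_floor \<alpha> t i k \<le> cell_floor \<alpha> t i (Suc k)"
    using assms(1,2) by (auto intro: cell_floor_mono)
  with assms(3) show "cell_floor \<alpha> t i l = cell_floor \<alpha> t i (Suc l)"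
    and "cell_floor \<alpha> t i l = cell_floor \<alpha> t i (Suc k)"
    and "cell_floor \<alpha> t i k = cell_floor \<alpha> t i (Suc k)"
    unfolding cell_key_def by linarith+
qed

lemma anchor_le_Suc: "anchor \<alpha> t k \<le> Suc k"
proof -
  have "(LEAST l. l \<in> dyadic_block (dyadic_index k) \<and>
      cell_key \<alpha> t (dyadic_index k) l = cell_key \<alpha> t (dyadic_index k) k) \<le> k"
    by (rule Least_le) (simp add: dyadic_index_mem)
  then show ?thesis by (auto simp: anchor_def Let_def)
qed

lemma anchor_light: "\<not> heavy \<alpha> t (dyadic_index k) \<Longrightarrow> anchor \<alpha> t k = 0"
  by (simp add: anchor_def)

lemma anchor_in_cell:
  assumes t: "0 < t" and i: "i = dyadic_index k" and heavy: "heavy \<alpha> t i"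
    and le: "anchor \<alpha> t k \<le> k"
  shows "anchor \<alpha> t k \<in> dyadic_block i"
    and "cell_floor \<alpha> t i (anchor \<alpha> t k) = cell_floor \<alpha> t i (Suc k)"
proof -
  define l where "l = (LEAST l. l \<in> dyadic_block i \<and> cell_key \<alpha> t i l = cell_key \<alpha> t i k)"
  have k: "k \<in> dyadic_block i" by (simp add: i dyadic_index_mem)
  have l: "l \<in> dyadic_block i \<and> cell_key \<alpha> t i l = cell_key \<alpha> t i k"
    unfolding l_def by (rule LeastI[of _ k]) (simp add: k)
  have "l \<le> k" unfolding l_def using k by (intro Least_le) simp
  have no_jump: "cell_floor \<alpha> t i k = cell_floor \<alpha> t i (Suc k)"
  proof (rule ccontr)
    assume "cell_floor \<alpha> t i k \<noteq> cell_floor \<alpha> t i (Suc k)"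
    then have "anchor \<alpha> t k = Suc k"
      using heavy by (simp add: anchor_def Let_def flip: i)
    with le show False by simp
  qed
  then have anchor: "anchor \<alpha> t k = l"
    using heavy by (simp add: anchor_def Let_def l_def flip: i)
  then show "anchor \<alpha> t k \<in> dyadic_block i" using l by simp
  show "cell_floor \<alpha> t i (anchor \<alpha> t k) = cell_floor \<alpha> t i (Suc k)"
  proof (cases "l < k")
    case True
    then show ?thesis using anchor cell_floor_eq_if_cell_key_eq(2)[OF t _ conjunct2[OF l]] by simp
  next
    case False
    with \<open>l \<le> k\<close> have "l = k" by simp
    with anchor no_jump show ?thesis by simp
  qed
qed

lemma cell_coord_diff_lt:
  assumes t: "0 < t" and heavy: "heavy \<alpha> t i" and "a \<le> b"
    and lt: "cell_coord \<alpha> t i b - cell_coord \<alpha> t i a < 1"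
  shows "mass_below \<alpha> i b - mass_below \<alpha> i a < t * block_mass \<alpha> i / sig \<alpha> i"
    and "real b - real a < t * block_length i / sig \<alpha> i"
proof -
  have s: "0 < sig \<alpha> i" using heavy_sig_pos[OF t heavy] .
  have A: "0 < block_mass \<alpha> i" using block_mass_pos[OF s] .
  have N: "0 < block_length i" by (rule block_length_pos)
  define P where "P = mass_below \<alpha> i b - mass_below \<alpha> i a"
  define Q where "Q = real b - real a"
  have "0 \<le> P" "0 \<le> Q" using mass_below_mono[OF \<open>a \<le> b\<close>] \<open>a \<le> b\<close> by (auto simp: P_def Q_def)
  have "cell_coord \<alpha> t i b - cell_coord \<alpha> t i a = (P / block_mass \<alpha> i + Q / block_length i) * sig \<alpha> i / t"
    using A N t unfolding cell_coord_def P_def Q_def by (simp add: field_simps)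
  with lt t have "P / block_mass \<alpha> i * sig \<alpha> i + Q / block_length i * sig \<alpha> i < t"
    by (simp add: pos_divide_less_eq distrib_right)
  moreover have "0 \<le> P / block_mass \<alpha> i * sig \<alpha> i" "0 \<le> Q / block_length i * sig \<alpha> i"
    using \<open>0 \<le> P\<close> \<open>0 \<le> Q\<close> A N s by simp_all
  ultimately have "P / block_mass \<alpha> i * sig \<alpha> i < t" "Q / block_length i * sig \<alpha> i < t"
    by linarith+
  then show "P < t * block_mass \<alpha> i / sig \<alpha> i" "Q < t * block_length i / sig \<alpha> i"
    using A N s by (simp_all add: field_simps)
qed

section \<open>Error of the anchored truncation\<close>

lemma anchor_heavy_block:
  assumes "0 < t" and "heavy \<alpha> t (dyadic_index k)" and "anchor \<alpha> t k \<le> j" and "j \<le> k"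
  shows "j \<in> dyadic_block (dyadic_index k)"
  using anchor_in_cell(1)[OF assms(1) refl assms(2)] assms(3,4) dyadic_index_mem[of k]
  by (auto simp: dyadic_block_def)

lemma cell_coord_anchor_lt:
  assumes "0 < t" and "heavy \<alpha> t (dyadic_index k)" and "anchor \<alpha> t k \<le> j" and "j \<le> Suc k"
  shows "cell_coord \<alpha> t (dyadic_index k) (Suc k) - cell_coord \<alpha> t (dyadic_index k) j < 1"
proof -
  let ?i = "dyadic_index k"
  have "anchor \<alpha> t k \<le> k \<or> j = Suc k" using assms(3,4) anchor_le_Suc[of \<alpha> t k] by linarith
  then show ?thesis
  proof
    assume "anchor \<alpha> t k \<le> k"
    then have "cell_floor \<alpha> t ?i (anchor \<alpha> t k) = cell_floor \<alpha> t ?i (Suc k)"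
      by (rule anchor_in_cell(2)[OF assms(1) refl assms(2)])
    then have "cell_coord \<alpha> t ?i (Suc k) - cell_coord \<alpha> t ?i (anchor \<alpha> t k) < 1"
      unfolding cell_floor_def by linarith
    moreover have "cell_coord \<alpha> t ?i (anchor \<alpha> t k) \<le> cell_coord \<alpha> t ?i j"
      by (rule cell_coord_mono[OF assms(1,3)])
    ultimately show ?thesis by linarith
  qed simp
qed

lemma sqrt_Suc_le_dyadic_start:
  assumes "j \<in> dyadic_block i"
  shows "sqrt (real j + 1) \<le> sqrt 2 * sqrt (real (dyadic_start i) + 1)"
proof -
  have "j + 1 \<le> 2 * (dyadic_start i + 1)"
    using assms two_pow_le_dyadic_start[of i] by (simp add: dyadic_block_def)
  then have "real (j + 1) \<le> real (2 * (dyadic_start i + 1))" by (simp only: of_nat_le_iff)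
  then have "sqrt (real j + 1) \<le> sqrt (2 * (real (dyadic_start i) + 1))"
    by (intro real_sqrt_le_mono) simp
  also have "\<dots> = sqrt 2 * sqrt (real (dyadic_start i) + 1)"
    by (rule real_sqrt_mult)
  finally show ?thesis .
qed

lemma anchor_heavy_weight:
  assumes t: "0 < t" and heavy: "heavy \<alpha> t (dyadic_index k)" and "anchor \<alpha> t k \<le> j" and "j \<le> k"
  shows "sqrt (real j + 1) * (\<Sum>x\<in>{anchor \<alpha> t k..k}. 1 / sqrt (real x + 1))
           \<le> sqrt 2 * (t * block_length (dyadic_index k) / sig \<alpha> (dyadic_index k))"
proof -
  define i where "i = dyadic_index k"
  define a where "a = anchor \<alpha> t k"
  define r where "r = sqrt (real (dyadic_start i) + 1)"
  have "a \<le> k" "a \<le> Suc k" using assms(3,4) by (simp_all add: a_def)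
  have "a \<in> dyadic_block i"
    using anchor_in_cell(1)[OF t i_def heavy[folded i_def]] \<open>a \<le> k\<close> by (simp add: a_def)
  then have r_le: "r \<le> sqrt (real x + 1)" if "a \<le> x" for x
    using that by (simp add: r_def dyadic_block_def)
  have "r > 0" by (simp add: r_def)
  have "(\<Sum>x\<in>{a..k}. 1 / sqrt (real x + 1)) \<le> (\<Sum>x\<in>{a..k}. 1 / r)"
    using \<open>r > 0\<close> r_le by (intro sum_mono divide_left_mono) auto
  also have "\<dots> = (real (Suc k) - real a) / r"
    using \<open>a \<le> Suc k\<close> by (simp add: of_nat_diff)
  finally have weight: "(\<Sum>x\<in>{a..k}. 1 / sqrt (real x + 1)) \<le> (real (Suc k) - real a) / r" .
  have "real (Suc k) - real a < t * block_length i / sig \<alpha> i"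
    using cell_coord_diff_lt(2)[OF t heavy[folded i_def] \<open>a \<le> Suc k\<close>]
      cell_coord_anchor_lt[OF t heavy order.refl \<open>a \<le> Suc k\<close>[unfolded a_def]]
    by (simp add: a_def i_def)
  moreover have "sqrt (real j + 1) \<le> sqrt 2 * r"
    unfolding r_def by (rule sqrt_Suc_le_dyadic_start) (use anchor_heavy_block[OF assms] in \<open>simp add: i_def\<close>)
  ultimately have "sqrt (real j + 1) * (\<Sum>x\<in>{a..k}. 1 / sqrt (real x + 1))
      \<le> (sqrt 2 * r) * ((real (Suc k) - real a) / r)"
    using weight \<open>r > 0\<close> by (intro mult_mono sum_nonneg) auto
  also have "\<dots> = sqrt 2 * (real (Suc k) - real a)"
    using \<open>r > 0\<close> by simp
  also have "\<dots> \<le> sqrt 2 * (t * block_length i / sig \<alpha> i)"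
    using \<open>real (Suc k) - real a < _\<close> by (intro mult_left_mono) auto
  finally show ?thesis by (simp add: a_def i_def)
qed

lemma anchor_heavy_mass:
  assumes t: "0 < t" and heavy: "heavy \<alpha> t i" and "finite S"
    and S: "\<And>k. k \<in> S \<Longrightarrow> dyadic_index k = i \<and> anchor \<alpha> t k \<le> j \<and> j \<le> k"
  shows "(\<Sum>k\<in>S. (cmod (\<alpha> k))\<^sup>2) \<le> t * block_mass \<alpha> i / sig \<alpha> i"
proof (cases "S = {}")
  case True
  then show ?thesis
    using t heavy_sig_pos[OF t heavy] block_mass_pos[OF heavy_sig_pos[OF t heavy]] by simp
next
  case False
  define m where "m = Max S"
  have "m \<in> S" using \<open>finite S\<close> False by (simp add: m_def)
  with S have m: "dyadic_index m = i" "anchor \<alpha> t m \<le> j" "j \<le> m" by auto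
  have "j \<in> dyadic_block i"
    using anchor_heavy_block[OF t _ m(2,3)] heavy m(1) by simp
  then have "dyadic_start i \<le> j" by (simp add: dyadic_block_def)
  have "(\<Sum>k\<in>S. (cmod (\<alpha> k))\<^sup>2) \<le> (\<Sum>k\<in>{j..<Suc m}. (cmod (\<alpha> k))\<^sup>2)"
    using S \<open>finite S\<close> by (intro sum_mono2) (auto simp: m_def less_Suc_eq_le)
  also have "\<dots> = mass_below \<alpha> i (Suc m) - mass_below \<alpha> i j"
    using \<open>dyadic_start i \<le> j\<close> m(3) by (simp add: mass_below_diff)
  also have "\<dots> < t * block_mass \<alpha> i / sig \<alpha> i"
    using cell_coord_diff_lt(1)[OF t heavy] cell_coord_anchor_lt[OF t _ m(2)] heavy m(1,3) by simp
  finally show ?thesis by simp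
qed

lemma schur_sum_heavy:
  assumes t: "0 < t"
  shows "sqrt (real j + 1) *
    (\<Sum>k | k < K \<and> anchor \<alpha> t k \<le> j \<and> j \<le> k \<and> heavy \<alpha> t (dyadic_index k).
       (cmod (\<alpha> k))\<^sup>2 * (\<Sum>x\<in>{anchor \<alpha> t k..k}. 1 / sqrt (real x + 1))) \<le> 2 * t\<^sup>2"
    (is "sqrt (real j + 1) * (\<Sum>k\<in>?S. _) \<le> _")
proof -
  define i where "i = dyadic_index j"
  have "finite ?S" by (rule finite_subset[of _ "{..<K}"]) auto
  have block: "dyadic_index k = i" if "k \<in> ?S" for k
    using that anchor_heavy_block[OF t] dyadic_index_eqI by (fastforce simp: i_def)
  show ?thesis
  proof (cases "heavy \<alpha> t i")
    case False
    then have empty: "?S = {}" using block by blast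
    show ?thesis unfolding empty by simp
  next
    case heavy: True
    define c where "c = sqrt 2 * (t * block_length i / sig \<alpha> i)"
    have s: "0 < sig \<alpha> i" by (rule heavy_sig_pos[OF t heavy])
    have "sqrt (real j + 1) * (\<Sum>k\<in>?S. (cmod (\<alpha> k))\<^sup>2 * (\<Sum>x\<in>{anchor \<alpha> t k..k}. 1 / sqrt (real x + 1)))
        = (\<Sum>k\<in>?S. (cmod (\<alpha> k))\<^sup>2 * (sqrt (real j + 1) * (\<Sum>x\<in>{anchor \<alpha> t k..k}. 1 / sqrt (real x + 1))))"
      by (simp add: sum_distrib_left mult_ac)
    also have "\<dots> \<le> (\<Sum>k\<in>?S. (cmod (\<alpha> k))\<^sup>2 * c)"
    proof (rule sum_mono)
      fix k assume k: "k \<in> ?S"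
      then have "sqrt (real j + 1) * (\<Sum>x\<in>{anchor \<alpha> t k..k}. 1 / sqrt (real x + 1)) \<le> c"
        using anchor_heavy_weight[OF t, of \<alpha> k j] block[OF k] by (simp add: c_def)
      then show "(cmod (\<alpha> k))\<^sup>2 * (sqrt (real j + 1) * (\<Sum>x\<in>{anchor \<alpha> t k..k}. 1 / sqrt (real x + 1)))
          \<le> (cmod (\<alpha> k))\<^sup>2 * c"
        by (rule mult_left_mono) simp
    qed
    also have "\<dots> = c * (\<Sum>k\<in>?S. (cmod (\<alpha> k))\<^sup>2)"
      by (simp add: sum_distrib_left mult.commute)
    also have "\<dots> \<le> c * (t * block_mass \<alpha> i / sig \<alpha> i)"
    proof (rule mult_left_mono)
      show "(\<Sum>k\<in>?S. (cmod (\<alpha> k))\<^sup>2) \<le> t * block_mass \<alpha> i / sig \<alpha> i"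
        using block by (intro anchor_heavy_mass[OF t heavy \<open>finite ?S\<close>]) auto
      show "0 \<le> c" using t s block_length_pos[of i] by (simp add: c_def)
    qed
    also have "\<dots> = sqrt 2 * t\<^sup>2 * (block_length i * block_mass \<alpha> i / (sig \<alpha> i)\<^sup>2)"
      by (simp add: c_def power2_eq_square)
    also have "\<dots> \<le> sqrt 2 * t\<^sup>2 * 1"
      using block_length_mass_le_sig[of i \<alpha>] s by (intro mult_left_mono) simp_all
    also have "\<dots> \<le> 2 * t\<^sup>2"
      using sqrt2_less_2 by (simp add: mult_right_mono)
    finally show ?thesis .
  qed
qed

lemma sum_inverse_sqrt_le: "(\<Sum>x\<in>{0..k}. 1 / sqrt (real x + 1)) \<le> 2 * sqrt (real k + 1)"
proof (induction k)
  case (Suc k)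
  define a where "a = sqrt (real k + 1)"
  define b where "b = sqrt (real k + 2)"
  have "0 < b" by (simp add: b_def)
  have "2 * a * b + 1 \<le> 2 * (b * b)"
    using sum_power2_ge_zero[of "b - a" 0] by (simp add: a_def b_def power2_eq_square algebra_simps)
  then have step: "2 * a + 1 / b \<le> 2 * b"
    using \<open>0 < b\<close> by (simp add: field_simps)
  have "(\<Sum>x\<in>{0..Suc k}. 1 / sqrt (real x + 1)) = (\<Sum>x\<in>{0..k}. 1 / sqrt (real x + 1)) + 1 / b"
    by (simp add: b_def add.commute)
  also have "\<dots> \<le> 2 * a + 1 / b" using Suc by (simp add: a_def)
  also have "\<dots> \<le> 2 * b" by (rule step)
  finally show ?case by (simp add: b_def add.commute)
qed simp

lemma light_block_bound:
  assumes "\<not> heavy \<alpha> t i"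
  shows "(\<Sum>k\<in>dyadic_block i. (cmod (\<alpha> k))\<^sup>2 * (2 * sqrt (real k + 1))) \<le> t\<^sup>2 / 8 * (sqrt 2 / sqrt 2 ^ i)"
proof -
  define r where "r = sqrt (real (dyadic_start i) + 1)"
  have "0 < r" by (simp add: r_def)
  have "(\<Sum>k\<in>dyadic_block i. (cmod (\<alpha> k))\<^sup>2 * (2 * sqrt (real k + 1)))
      \<le> (\<Sum>k\<in>dyadic_block i. 2 * (real (k + 1) * (cmod (\<alpha> k))\<^sup>2) / r)"
  proof (rule sum_mono)
    fix k assume "k \<in> dyadic_block i"
    then have "r \<le> sqrt (real k + 1)" by (simp add: r_def dyadic_block_def)
    then have "r * sqrt (real k + 1) \<le> real k + 1"
      using mult_right_mono[of r "sqrt (real k + 1)" "sqrt (real k + 1)"] by simp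
    then have "sqrt (real k + 1) \<le> (real k + 1) / r"
      using \<open>0 < r\<close> by (simp add: field_simps)
    then have "(cmod (\<alpha> k))\<^sup>2 * (2 * sqrt (real k + 1)) \<le> (cmod (\<alpha> k))\<^sup>2 * (2 * ((real k + 1) / r))"
      by (intro mult_left_mono) auto
    then show "(cmod (\<alpha> k))\<^sup>2 * (2 * sqrt (real k + 1)) \<le> 2 * (real (k + 1) * (cmod (\<alpha> k))\<^sup>2) / r"
      by (simp add: algebra_simps)
  qed
  also have "\<dots> = 2 * (sig \<alpha> i)\<^sup>2 / r"
    by (simp add: sig_squared sum_divide_distrib sum_distrib_left)
  also have "\<dots> \<le> 2 * (t / 4)\<^sup>2 / r"
    using assms sig_nonneg[of \<alpha> i] \<open>0 < r\<close>
    by (intro divide_right_mono mult_left_mono power_mono) (auto simp: heavy_def)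
  also have "\<dots> \<le> t\<^sup>2 / 8 * (sqrt 2 / sqrt 2 ^ i)"
  proof -
    have "sqrt 2 ^ i = sqrt (2 ^ i)" by (simp add: real_sqrt_power)
    also have "\<dots> \<le> sqrt (2 * (real (dyadic_start i) + 1))"
    proof (rule real_sqrt_le_mono)
      have "real (2 ^ i) \<le> real (2 * (dyadic_start i + 1))"
        by (simp only: of_nat_le_iff two_pow_le_dyadic_start)
      then show "2 ^ i \<le> 2 * (real (dyadic_start i) + 1)" by simp
    qed
    also have "\<dots> = sqrt 2 * r" unfolding r_def by (rule real_sqrt_mult)
    finally have "1 / r \<le> sqrt 2 / sqrt 2 ^ i"
      using \<open>0 < r\<close> by (simp add: field_simps)
    then have "t\<^sup>2 / 8 * (1 / r) \<le> t\<^sup>2 / 8 * (sqrt 2 / sqrt 2 ^ i)"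
      by (intro mult_left_mono) auto
    then show ?thesis by (simp add: power_divide)
  qed
  finally show ?thesis .
qed

lemma sqrt_Suc_le_sqrt2_pow_dyadic_index: "sqrt (real j + 1) \<le> sqrt 2 ^ dyadic_index j"
proof -
  have "real (j + 1) \<le> real (2 ^ dyadic_index j)"
    using dyadic_index_less[of j] by (simp only: of_nat_le_iff)
  then have "sqrt (real j + 1) \<le> sqrt (2 ^ dyadic_index j)"
    by (intro real_sqrt_le_mono) simp
  then show ?thesis by (simp add: real_sqrt_power)
qed

lemma sum_geometric_decay_le:
  fixes q :: real
  assumes "1 < q"
  shows "(\<Sum>i\<in>{a..<b}. q ^ a / q ^ i) \<le> q / (q - 1)"
proof -
  have "(\<Sum>i\<in>{a..<b}. q ^ a / q ^ i) = (\<Sum>m<b - a. (1 / q) ^ m)"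
  proof -
    have "(\<Sum>i\<in>{a..<b}. q ^ a / q ^ i) = (\<Sum>m\<in>{0..<b - a}. q ^ a / q ^ (m + a))"
      by (rule sum.reindex_bij_witness[of _ "\<lambda>m. m + a" "\<lambda>i. i - a"]) auto
    also have "\<dots> = (\<Sum>m<b - a. (1 / q) ^ m)"
      using assms by (intro sum.cong) (auto simp: power_add power_one_over)
    finally show ?thesis .
  qed
  also have "\<dots> = (1 - (1 / q) ^ (b - a)) / (1 - 1 / q)"
    using assms by (subst sum_gp_strict) auto
  also have "\<dots> \<le> 1 / (1 - 1 / q)"
    using assms by (intro divide_right_mono) auto
  also have "\<dots> = q / (q - 1)"
    using assms by (simp add: field_simps)
  finally show ?thesis .
qed

lemma sqrt2_geometric_sum_le: "sqrt 2 ^ a * (\<Sum>i\<in>{a..<b}. sqrt 2 / sqrt 2 ^ i) \<le> 8"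
proof -
  define q :: real where "q = sqrt 2"
  have "5 / 4 \<le> q"
    unfolding q_def by (rule real_le_rsqrt) (simp add: power2_eq_square)
  have "q ^ a * (\<Sum>i\<in>{a..<b}. q / q ^ i) = q * (\<Sum>i\<in>{a..<b}. q ^ a / q ^ i)"
    by (simp add: sum_distrib_left mult_ac)
  also have "\<dots> \<le> q * (q / (q - 1))"
    using \<open>5 / 4 \<le> q\<close> by (intro mult_left_mono sum_geometric_decay_le) auto
  also have "\<dots> = 2 / (q - 1)"
    by (simp add: q_def power2_eq_square[symmetric])
  also have "\<dots> \<le> 8"
    using \<open>5 / 4 \<le> q\<close> by (simp add: field_simps)
  finally show ?thesis by (simp add: q_def)
qed

lemma schur_sum_light:
  assumes t: "0 < t"
  shows "sqrt (real j + 1) *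
    (\<Sum>k | j \<le> k \<and> k < K \<and> \<not> heavy \<alpha> t (dyadic_index k). (cmod (\<alpha> k))\<^sup>2 * (2 * sqrt (real k + 1)))
      \<le> t\<^sup>2"
    (is "sqrt (real j + 1) * (\<Sum>k\<in>?S. ?h k) \<le> _")
proof -
  define q :: real where "q = sqrt 2"
  define i0 where "i0 = dyadic_index j"
  define T where "T = {i0..<Suc (dyadic_index K)}"
  have "finite ?S" by (rule finite_subset[of _ "{..<K}"]) auto
  have "dyadic_index ` ?S \<subseteq> T"
    by (auto simp: T_def i0_def less_Suc_eq_le intro!: dyadic_index_mono)
  then have "(\<Sum>k\<in>?S. ?h k) = (\<Sum>i\<in>T. \<Sum>k | k \<in> ?S \<and> dyadic_index k = i. ?h k)"
    using \<open>finite ?S\<close> by (intro sum.group[symmetric]) (auto simp: T_def)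
  also have "\<dots> \<le> (\<Sum>i\<in>T. t\<^sup>2 / 8 * (q / q ^ i))"
  proof (rule sum_mono)
    fix i
    show "(\<Sum>k | k \<in> ?S \<and> dyadic_index k = i. ?h k) \<le> t\<^sup>2 / 8 * (q / q ^ i)"
    proof (cases "heavy \<alpha> t i")
      case True
      then have empty: "{k. k \<in> ?S \<and> dyadic_index k = i} = {}" by auto
      show ?thesis unfolding empty by (simp add: q_def)
    next
      case False
      have "(\<Sum>k | k \<in> ?S \<and> dyadic_index k = i. ?h k) \<le> (\<Sum>k\<in>dyadic_block i. ?h k)"
        using dyadic_index_mem by (intro sum_mono2) auto
      also have "\<dots> \<le> t\<^sup>2 / 8 * (q / q ^ i)"
        unfolding q_def by (rule light_block_bound[OF False])
      finally show ?thesis .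
    qed
  qed
  finally have "(\<Sum>k\<in>?S. ?h k) \<le> t\<^sup>2 / 8 * (\<Sum>i\<in>T. q / q ^ i)"
    by (simp add: sum_distrib_left)
  then have "sqrt (real j + 1) * (\<Sum>k\<in>?S. ?h k) \<le> q ^ i0 * (t\<^sup>2 / 8 * (\<Sum>i\<in>T. q / q ^ i))"
    using sqrt_Suc_le_sqrt2_pow_dyadic_index[of j]
    by (intro mult_mono) (auto simp: q_def i0_def intro: sum_nonneg)
  also have "\<dots> = t\<^sup>2 / 8 * (q ^ i0 * (\<Sum>i\<in>T. q / q ^ i))"
    by simp
  also have "\<dots> \<le> t\<^sup>2 / 8 * 8"
    unfolding q_def T_def by (intro mult_left_mono sqrt2_geometric_sum_le) simp
  finally show ?thesis by simp
qed

lemma schur_sum_anchor: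
  assumes t: "0 < t"
  shows "(\<Sum>k | k < K \<and> anchor \<alpha> t k \<le> j \<and> j \<le> k.
            (cmod (\<alpha> k))\<^sup>2 * (\<Sum>x\<in>{anchor \<alpha> t k..k}. 1 / sqrt (real x + 1)))
           \<le> 3 * t\<^sup>2 * (1 / sqrt (real j + 1))"
proof -
  define h where "h k = (cmod (\<alpha> k))\<^sup>2 * (\<Sum>x\<in>{anchor \<alpha> t k..k}. 1 / sqrt (real x + 1))" for k
  define S where "S = {k. k < K \<and> anchor \<alpha> t k \<le> j \<and> j \<le> k}"
  define H where "H = {k. heavy \<alpha> t (dyadic_index k)}"
  define L where "L = {k. j \<le> k \<and> k < K \<and> \<not> heavy \<alpha> t (dyadic_index k)}"
  have "finite S" "finite L"
    unfolding S_def L_def by (auto intro: finite_subset[of _ "{..<K}"])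
  have heavy_part: "sqrt (real j + 1) * (\<Sum>k\<in>S \<inter> H. h k) \<le> 2 * t\<^sup>2"
    using schur_sum_heavy[OF t, where j = j and K = K and \<alpha> = \<alpha>] unfolding S_def H_def h_def Int_def by (simp add: conj_ac)
  have "(\<Sum>k\<in>S - H. h k) \<le> (\<Sum>k\<in>S - H. (cmod (\<alpha> k))\<^sup>2 * (2 * sqrt (real k + 1)))"
  proof (rule sum_mono)
    fix k assume "k \<in> S - H"
    then have "anchor \<alpha> t k = 0" by (simp add: H_def anchor_light)
    then show "h k \<le> (cmod (\<alpha> k))\<^sup>2 * (2 * sqrt (real k + 1))"
      unfolding h_def using sum_inverse_sqrt_le[of k] by (intro mult_left_mono) simp_all
  qed
  also have "\<dots> \<le> (\<Sum>k\<in>L. (cmod (\<alpha> k))\<^sup>2 * (2 * sqrt (real k + 1)))"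
    using \<open>finite L\<close> by (intro sum_mono2) (auto simp: S_def H_def L_def)
  finally have "sqrt (real j + 1) * (\<Sum>k\<in>S - H. h k)
      \<le> sqrt (real j + 1) * (\<Sum>k\<in>L. (cmod (\<alpha> k))\<^sup>2 * (2 * sqrt (real k + 1)))"
    by (rule mult_left_mono) simp
  also have "\<dots> \<le> t\<^sup>2"
    unfolding L_def by (rule schur_sum_light[OF t])
  finally have light_part: "sqrt (real j + 1) * (\<Sum>k\<in>S - H. h k) \<le> t\<^sup>2" .
  have "sqrt (real j + 1) * (\<Sum>k\<in>S. h k) \<le> 3 * t\<^sup>2"
    using heavy_part light_part sum.Int_Diff[OF \<open>finite S\<close>, of h H] by (simp add: distrib_left)
  then show ?thesis
    unfolding S_def h_def by (simp add: field_simps)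
qed

section \<open>Rank of the anchored truncation\<close>

lemma cell_key_range:
  assumes t: "0 < t" and heavy: "heavy \<alpha> t i" and k: "k \<in> dyadic_block i"
  shows "cell_key \<alpha> t i k \<in> {0..\<lfloor>4 * sig \<alpha> i / t\<rfloor>}"
proof -
  have s: "0 < sig \<alpha> i" by (rule heavy_sig_pos[OF t heavy])
  have A: "0 < block_mass \<alpha> i" by (rule block_mass_pos[OF s])
  have "dyadic_start i \<le> k" "k < 2 ^ i" using k by (auto simp: dyadic_block_def)
  have "0 \<le> mass_below \<alpha> i k" by (simp add: mass_below_def sum_nonneg)
  then have "0 \<le> cell_coord \<alpha> t i k"
    unfolding cell_coord_def using A block_length_pos[of i] s t \<open>dyadic_start i \<le> k\<close> by simp
  then have low: "0 \<le> cell_floor \<alpha> t i k" by (simp add: cell_floor_def)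
  have "mass_below \<alpha> i (2 ^ i) = block_mass \<alpha> i"
    by (simp add: mass_below_def block_mass_def dyadic_block_def)
  moreover have "real (2 ^ i) - real (dyadic_start i) = block_length i"
    using dyadic_start_less[of i] by (simp add: block_length_def of_nat_diff)
  ultimately have "cell_coord \<alpha> t i (2 ^ i) = 2 * sig \<alpha> i / t"
    using A block_length_pos[of i] by (simp add: cell_coord_def)
  moreover have "cell_coord \<alpha> t i (Suc k) \<le> cell_coord \<alpha> t i (2 ^ i)"
    using \<open>k < 2 ^ i\<close> by (intro cell_coord_mono[OF t]) simp
  ultimately have high: "cell_floor \<alpha> t i (Suc k) \<le> \<lfloor>2 * sig \<alpha> i / t\<rfloor>"
    unfolding cell_floor_def by (simp add: floor_mono)
  have "4 * sig \<alpha> i / t = 2 * (2 * sig \<alpha> i / t)" by simp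
  with of_int_floor_le[of "2 * sig \<alpha> i / t"]
  have "2 * real_of_int \<lfloor>2 * sig \<alpha> i / t\<rfloor> \<le> 4 * sig \<alpha> i / t" by linarith
  then have "2 * \<lfloor>2 * sig \<alpha> i / t\<rfloor> \<le> \<lfloor>4 * sig \<alpha> i / t\<rfloor>"
    by (simp add: le_floor_iff)
  moreover have "cell_floor \<alpha> t i k \<le> cell_floor \<alpha> t i (Suc k)"
    by (rule cell_floor_mono[OF t]) simp
  ultimately show ?thesis
    using low high by (simp add: cell_key_def)
qed

lemma card_anchor_block:
  assumes t: "0 < t" and heavy: "heavy \<alpha> t i"
  shows "card (anchor \<alpha> t ` dyadic_block i) \<le> nat (\<lfloor>4 * sig \<alpha> i / t\<rfloor> + 1)"
proof -
  define first where "first v = (LEAST l. l \<in> dyadic_block i \<and> cell_key \<alpha> t i l = v)" for v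
  define G where "G v = (if cell_floor \<alpha> t i (first v) \<noteq> cell_floor \<alpha> t i (Suc (first v))
    then Suc (first v) else first v)" for v
  have "anchor \<alpha> t k = G (cell_key \<alpha> t i k)" if k: "k \<in> dyadic_block i" for k
  proof -
    define l where "l = first (cell_key \<alpha> t i k)"
    have l: "cell_key \<alpha> t i l = cell_key \<alpha> t i k"
      using LeastI[of "\<lambda>l. l \<in> dyadic_block i \<and> cell_key \<alpha> t i l = cell_key \<alpha> t i k" k] k
      by (simp add: l_def first_def)
    have "l \<le> k" unfolding l_def first_def using k by (intro Least_le) simp
    have anchor: "anchor \<alpha> t k = (if cell_floor \<alpha> t i k \<noteq> cell_floor \<alpha> t i (Suc k) then Suc k else l)"
      using heavy dyadic_index_eqI[OF k] by (simp add: anchor_def l_def first_def)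
    show ?thesis
    proof (cases "l < k")
      case True
      with cell_floor_eq_if_cell_key_eq[OF t True l] show ?thesis
        by (simp add: anchor G_def l_def)
    next
      case False
      with \<open>l \<le> k\<close> have "l = k" by simp
      then show ?thesis by (simp add: anchor G_def l_def)
    qed
  qed
  then have "anchor \<alpha> t ` dyadic_block i = G ` cell_key \<alpha> t i ` dyadic_block i"
    by (auto simp: image_iff)
  then have "card (anchor \<alpha> t ` dyadic_block i) \<le> card (cell_key \<alpha> t i ` dyadic_block i)"
    by (simp add: card_image_le)
  also have "\<dots> \<le> card {0..\<lfloor>4 * sig \<alpha> i / t\<rfloor>}"
    using cell_key_range[OF t heavy] by (intro card_mono) auto
  finally show ?thesis by simp
qed

lemma anchor_range:
  assumes t: "0 < t" and fin: "finite {i. heavy \<alpha> t i}"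
  shows "finite (range (anchor \<alpha> t))"
    and "card (range (anchor \<alpha> t) - {0}) \<le> anchor_count \<alpha> t"
proof -
  define U where "U = (\<Union>i\<in>{i. heavy \<alpha> t i}. anchor \<alpha> t ` dyadic_block i)"
  have "finite U" unfolding U_def using fin by (intro finite_UN_I finite_imageI) simp_all
  have sub: "range (anchor \<alpha> t) - {0} \<subseteq> U"
  proof
    fix x assume "x \<in> range (anchor \<alpha> t) - {0}"
    then obtain k where x: "x = anchor \<alpha> t k" and "anchor \<alpha> t k \<noteq> 0" by auto
    have "heavy \<alpha> t (dyadic_index k)"
    proof (rule ccontr)
      assume "\<not> heavy \<alpha> t (dyadic_index k)"
      then have "anchor \<alpha> t k = 0" by (rule anchor_light)
      with \<open>anchor \<alpha> t k \<noteq> 0\<close> show False by contradiction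
    qed
    then show "x \<in> U"
      unfolding U_def x by (intro UN_I[of "dyadic_index k"] imageI) (simp_all add: dyadic_index_mem)
  qed
  then have "range (anchor \<alpha> t) \<subseteq> insert 0 U" by (simp add: Diff_subset_conv)
  then show "finite (range (anchor \<alpha> t))" by (rule finite_subset) (simp add: \<open>finite U\<close>)
  have "card (range (anchor \<alpha> t) - {0}) \<le> card U"
    by (rule card_mono[OF \<open>finite U\<close> sub])
  also have "\<dots> \<le> (\<Sum>i | heavy \<alpha> t i. card (anchor \<alpha> t ` dyadic_block i))"
    unfolding U_def by (rule card_UN_le[OF fin])
  also have "\<dots> \<le> anchor_count \<alpha> t"
    unfolding anchor_count_def by (intro sum_mono card_anchor_block[OF t]) simp
  finally show "card (range (anchor \<alpha> t) - {0}) \<le> anchor_count \<alpha> t" .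
qed

lemma approx_num_R_op_le:
  assumes "\<alpha> \<in> l2" and t: "0 < t" and "finite {i. heavy \<alpha> t i}" and "anchor_count \<alpha> t \<le> n"
  shows "approx_num (R_op \<alpha>) n \<le> ereal (2 * t)"
proof -
  have "lin_rank_le n (R_cut \<alpha> (anchor \<alpha> t))"
    using anchor_range[OF t assms(3)] assms(4) by (intro lin_rank_le_R_cut[OF assms(1)]) auto
  then have "approx_num (R_op \<alpha>) n \<le> opnorm (\<lambda>f k. R_op \<alpha> f k - R_cut \<alpha> (anchor \<alpha> t) f k)"
    by (rule approx_num_le_opnorm)
  also have "\<dots> \<le> ereal (sqrt (3 * t\<^sup>2))"
    using anchor_le_Suc schur_sum_anchor[OF t]
    by (intro opnorm_R_op_minus_R_cut_le[where w = "\<lambda>x. 1 / sqrt (real x + 1)"]) simp_all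
  also have "sqrt (3 * t\<^sup>2) \<le> 2 * t"
    using t by (intro real_le_lsqrt) (simp_all add: power2_eq_square)
  finally show ?thesis by simp
qed

section \<open>Summation over dyadic levels\<close>

lemma powr_le_sum_levels:
  fixes f :: "nat \<Rightarrow> real" and N :: "real \<Rightarrow> nat"
  assumes "0 < p" and "0 < c" and "0 \<le> f n" and "f n \<le> 4 * c"
    and level: "\<And>t. 0 < t \<Longrightarrow> N t \<le> n \<Longrightarrow> f n \<le> 2 * t"
  shows "f n powr p \<le> (\<Sum>j<J. if n < N (c / 2 ^ j) then (4 * c / 2 ^ j) powr p else 0) + (4 * c / 2 ^ J) powr p"
proof (induction J)
  case 0
  then show ?case using assms(1,3,4) by (simp add: powr_mono2)
next
  case (Suc J)
  define v where "v = c / 2 ^ J"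
  have "0 < v" using \<open>0 < c\<close> by (simp add: v_def)
  have next_level: "4 * c / 2 ^ Suc J = 2 * v" by (simp add: v_def)
  show ?case
  proof (cases "n < N v")
    case True
    with Suc.IH show ?thesis
      by (simp add: v_def next_level) (use powr_ge_zero[of "2 * c / 2 ^ J" p] in linarith)
  next
    case False
    then have "f n powr p \<le> (2 * v) powr p"
      using level[OF \<open>0 < v\<close>] assms(1,3) by (intro powr_mono2) auto
    moreover have "0 \<le> (\<Sum>j<J. if n < N (c / 2 ^ j) then (4 * c / 2 ^ j) powr p else 0)"
      by (rule sum_nonneg) simp
    ultimately show ?thesis
      using False by (simp add: v_def next_level)
  qed
qed

lemma sum_powr_le_levels:
  fixes f :: "nat \<Rightarrow> real" and N :: "real \<Rightarrow> nat"
  assumes "0 < p" and "0 < c" and "\<And>n. 0 \<le> f n" and "\<And>n. f n \<le> 4 * c"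
    and "\<And>t n. 0 < t \<Longrightarrow> N t \<le> n \<Longrightarrow> f n \<le> 2 * t"
  shows "(\<Sum>n<M. f n powr p)
           \<le> (\<Sum>j<J. real (N (c / 2 ^ j)) * (4 * c / 2 ^ j) powr p) + real M * (4 * c / 2 ^ J) powr p"
proof -
  have "(\<Sum>n<M. f n powr p)
      \<le> (\<Sum>n<M. (\<Sum>j<J. if n < N (c / 2 ^ j) then (4 * c / 2 ^ j) powr p else 0) + (4 * c / 2 ^ J) powr p)"
    using assms by (intro sum_mono powr_le_sum_levels) auto
  also have "\<dots> = (\<Sum>j<J. \<Sum>n<M. if n < N (c / 2 ^ j) then (4 * c / 2 ^ j) powr p else 0)
      + real M * (4 * c / 2 ^ J) powr p"
    by (simp add: sum.distrib sum.swap[of _ "{..<M}"])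
  also have "\<dots> \<le> (\<Sum>j<J. real (N (c / 2 ^ j)) * (4 * c / 2 ^ j) powr p) + real M * (4 * c / 2 ^ J) powr p"
  proof -
    have "(\<Sum>n<M. if n < N (c / 2 ^ j) then (4 * c / 2 ^ j) powr p else 0)
        = real (card {n. n < M \<and> n < N (c / 2 ^ j)}) * (4 * c / 2 ^ j) powr p" for j
      by (simp add: sum.If_cases Int_def conj_commute)
    moreover have "card {n. n < M \<and> n < N (c / 2 ^ j)} \<le> N (c / 2 ^ j)" for j
      using card_mono[of "{..<N (c / 2 ^ j)}" "{n. n < M \<and> n < N (c / 2 ^ j)}"] by auto
    ultimately show ?thesis
      by (intro add_mono sum_mono order.refl) (simp add: mult_right_mono)
  qed
  finally show ?thesis .
qed

lemma summable_powr_le_levels: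
  fixes f :: "nat \<Rightarrow> real" and N :: "real \<Rightarrow> nat"
  assumes "0 < p" and "0 < c" and "\<And>n. 0 \<le> f n" and "\<And>n. f n \<le> 4 * c"
    and "\<And>t n. 0 < t \<Longrightarrow> N t \<le> n \<Longrightarrow> f n \<le> 2 * t"
    and levels: "\<And>J. (\<Sum>j<J. real (N (c / 2 ^ j)) * (4 * c / 2 ^ j) powr p) \<le> B"
  shows "summable (\<lambda>n. f n powr p)" and "(\<Sum>n. f n powr p) \<le> B"
proof -
  have partial: "(\<Sum>n<M. f n powr p) \<le> B" for M
  proof (rule LIMSEQ_le_const)
    have "(\<lambda>J. 4 * c / 2 ^ J) \<longlonglongrightarrow> 0"
      by (rule LIMSEQ_divide_realpow_zero) simp
    then have decay: "(\<lambda>J. (4 * c / 2 ^ J) powr p) \<longlonglongrightarrow> 0"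
      using assms(1,2) by (intro tendsto_zero_powrI) auto
    show "(\<lambda>J. B + real M * (4 * c / 2 ^ J) powr p) \<longlonglongrightarrow> B"
      using tendsto_add[OF tendsto_const[of B] tendsto_mult[OF tendsto_const[of "real M"] decay]] by simp
    show "\<exists>J0. \<forall>J\<ge>J0. (\<Sum>n<M. f n powr p) \<le> B + real M * (4 * c / 2 ^ J) powr p"
    proof (intro exI[of _ 0] allI impI)
      fix J
      show "(\<Sum>n<M. f n powr p) \<le> B + real M * (4 * c / 2 ^ J) powr p"
        using sum_powr_le_levels[where f = f and N = N and M = M and J = J, OF assms(1-5)] levels[of J]
        by linarith
    qed
  qed
  then show "summable (\<lambda>n. f n powr p)"
    by (intro summableI_nonneg_bounded) simp_all
  then show "(\<Sum>n. f n powr p) \<le> B"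
    using partial by (rule suminf_le_const)
qed

lemma half_powr_less_one: "0 < q \<Longrightarrow> (1/2 :: real) powr q < 1"
  using powr_less_mono2[of q "1/2" 1] by simp

lemma sum_levels_below_powr_le:
  fixes c x q :: real
  assumes c: "0 < c" and x: "0 < x" and q: "0 < q"
  shows "(\<Sum>j<J. if c / 2 ^ j < x then (c / 2 ^ j) powr q else 0) \<le> x powr q / (1 - (1/2) powr q)"
proof -
  define r where "r = (1/2 :: real) powr q"
  have "r < 1" unfolding r_def using q by (rule half_powr_less_one)
  have invariant: "(1 - r) * (\<Sum>j<J. if c / 2 ^ j < x then (c / 2 ^ j) powr q else 0)
      + (min (c / 2 ^ J) x) powr q \<le> x powr q" for J
  proof (induction J)
    case 0
    show ?case using c x q by (simp add: powr_mono2)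
  next
    case (Suc J)
    define S where "S = (\<Sum>j<J. if c / 2 ^ j < x then (c / 2 ^ j) powr q else 0)"
    define v where "v = c / 2 ^ J"
    have "0 < v" using c by (simp add: v_def)
    have next_level: "c / 2 ^ Suc J = v / 2" by (simp add: v_def)
    have IH: "(1 - r) * S + (min v x) powr q \<le> x powr q"
      using Suc.IH by (simp add: S_def v_def)
    have sum_Suc: "(\<Sum>j<Suc J. if c / 2 ^ j < x then (c / 2 ^ j) powr q else 0)
        = S + (if v < x then v powr q else 0)"
      by (simp add: S_def v_def)
    show ?case
      unfolding sum_Suc next_level
    proof (cases "v < x")
      case True
      then have min_v: "min v x = v" and min_half: "min (v / 2) x = v / 2" using \<open>0 < v\<close> by auto
      have "(1 - r) * (S + v powr q) + (v / 2) powr q = (1 - r) * S + v powr q"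
        by (simp add: r_def powr_divide algebra_simps add_divide_distrib)
      with IH True show "(1 - r) * (S + (if v < x then v powr q else 0)) + (min (v / 2) x) powr q \<le> x powr q"
        by (simp add: min_v min_half)
    next
      case False
      then have "(1 - r) * S \<le> 0" using IH by simp
      moreover have "(min (v / 2) x) powr q \<le> x powr q"
        using \<open>0 < v\<close> x q by (intro powr_mono2) auto
      ultimately show "(1 - r) * (S + (if v < x then v powr q else 0)) + (min (v / 2) x) powr q \<le> x powr q"
        using False by simp
    qed
  qed
  have "(1 - r) * (\<Sum>j<J. if c / 2 ^ j < x then (c / 2 ^ j) powr q else 0) \<le> x powr q"
    using invariant[of J] powr_ge_zero[of "min (c / 2 ^ J) x" q] by linarith
  with \<open>r < 1\<close> show ?thesis
    by (simp add: r_def pos_le_divide_eq mult.commute)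
qed

lemma heavy_finite:
  assumes "0 < p" and "summable (\<lambda>m. sig \<alpha> m powr p)" and "0 < t"
  shows "finite {i. heavy \<alpha> t i}"
proof -
  have "(\<lambda>m. sig \<alpha> m powr p) \<longlonglongrightarrow> 0"
    by (rule summable_LIMSEQ_zero[OF assms(2)])
  moreover have "0 < (t / 4) powr p" using assms(3) by simp
  ultimately obtain N where N: "\<And>m. N \<le> m \<Longrightarrow> sig \<alpha> m powr p < (t / 4) powr p"
    by (metis (no_types, lifting) eventually_sequentially order_tendstoD(2))
  have "{i. heavy \<alpha> t i} \<subseteq> {..<N}"
  proof
    fix i assume "i \<in> {i. heavy \<alpha> t i}"
    then have "(t / 4) powr p < sig \<alpha> i powr p"
      using assms(1,3) by (intro powr_less_mono2) (auto simp: heavy_def)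
    with N show "i \<in> {..<N}" by (meson not_less order.asym lessThan_iff)
  qed
  then show ?thesis by (rule finite_subset) simp
qed

lemma anchor_count_level_le:
  assumes v: "0 < v" and "finite F" and heavy: "{i. heavy \<alpha> v i} \<subseteq> F"
  shows "real (anchor_count \<alpha> v) * (4 * v) powr p
           \<le> (\<Sum>i\<in>F. 4 powr p * 8 * sig \<alpha> i * (if v < 4 * sig \<alpha> i then v powr (p - 1) else 0))"
proof -
  have "real (anchor_count \<alpha> v) \<le> (\<Sum>i | heavy \<alpha> v i. 8 * sig \<alpha> i / v)"
    unfolding anchor_count_def of_nat_sum
  proof (rule sum_mono)
    fix i assume "i \<in> {i. heavy \<alpha> v i}"
    then have "1 < 4 * sig \<alpha> i / v" using v by (simp add: heavy_def)
    then show "real (nat (\<lfloor>4 * sig \<alpha> i / v\<rfloor> + 1)) \<le> 8 * sig \<alpha> i / v"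
      using of_int_floor_le[of "4 * sig \<alpha> i / v"] by linarith
  qed
  also have "\<dots> = (\<Sum>i\<in>F. if heavy \<alpha> v i then 8 * sig \<alpha> i / v else 0)"
    unfolding sum.inter_filter[OF \<open>finite F\<close>, symmetric] using heavy by (intro sum.cong) auto
  finally have count: "real (anchor_count \<alpha> v) \<le> (\<Sum>i\<in>F. if heavy \<alpha> v i then 8 * sig \<alpha> i / v else 0)" .
  have "(if heavy \<alpha> v i then 8 * sig \<alpha> i / v else 0) * (4 * v) powr p
      = 4 powr p * 8 * sig \<alpha> i * (if v < 4 * sig \<alpha> i then v powr (p - 1) else 0)" for i
    using v by (simp add: heavy_def powr_mult powr_diff)
  then have "(\<Sum>i\<in>F. if heavy \<alpha> v i then 8 * sig \<alpha> i / v else 0) * (4 * v) powr p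
      = (\<Sum>i\<in>F. 4 powr p * 8 * sig \<alpha> i * (if v < 4 * sig \<alpha> i then v powr (p - 1) else 0))"
    by (simp add: sum_distrib_right)
  with count show ?thesis
    by (metis mult_right_mono powr_ge_zero)
qed

definition level_const :: "real \<Rightarrow> real" where
  "level_const p = 4 powr p * 8 * 4 powr (p - 1) / (1 - (1/2) powr (p - 1))"

lemma level_const_pos: "1 < p \<Longrightarrow> 0 < level_const p"
  unfolding level_const_def using half_powr_less_one[of "p - 1"] by simp

lemma dyadic_level_sum_le:
  assumes p: "1 < p" and c: "0 < c" and s: "0 < s"
  shows "4 powr p * 8 * s * (\<Sum>j<J. if c / 2 ^ j < 4 * s then (c / 2 ^ j) powr (p - 1) else 0)
           \<le> level_const p * s powr p"
proof -
  have "4 powr p * 8 * s * (\<Sum>j<J. if c / 2 ^ j < 4 * s then (c / 2 ^ j) powr (p - 1) else 0)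
      \<le> 4 powr p * 8 * s * ((4 * s) powr (p - 1) / (1 - (1/2) powr (p - 1)))"
    using s c p by (intro mult_left_mono sum_levels_below_powr_le) auto
  also have "\<dots> = 4 powr p * 8 * (s * (4 * s) powr (p - 1)) / (1 - (1/2) powr (p - 1))"
    by simp
  also have "s * (4 * s) powr (p - 1) = 4 powr (p - 1) * s powr p"
    using s by (simp add: powr_mult powr_diff)
  finally show ?thesis
    by (simp add: level_const_def)
qed

lemma sum_anchor_count_levels_le:
  assumes p: "1 < p" and sm: "summable (\<lambda>m. sig \<alpha> m powr p)" and c: "0 < c"
  shows "(\<Sum>j<J. real (anchor_count \<alpha> (c / 2 ^ j)) * (4 * c / 2 ^ j) powr p)
           \<le> level_const p * (\<Sum>m. sig \<alpha> m powr p)"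
proof -
  define F where "F = {i. heavy \<alpha> (c / 2 ^ J) i}"
  define K where "K = level_const p"
  have "finite F" unfolding F_def using p c by (intro heavy_finite[OF _ sm]) auto
  have "(\<Sum>j<J. real (anchor_count \<alpha> (c / 2 ^ j)) * (4 * c / 2 ^ j) powr p)
      \<le> (\<Sum>j<J. \<Sum>i\<in>F. 4 powr p * 8 * sig \<alpha> i * (if c / 2 ^ j < 4 * sig \<alpha> i then (c / 2 ^ j) powr (p - 1) else 0))"
  proof (rule sum_mono)
    fix j assume "j \<in> {..<J}"
    then have "c / 2 ^ J \<le> c / 2 ^ j" using c by (simp add: frac_le)
    then have "{i. heavy \<alpha> (c / 2 ^ j) i} \<subseteq> F" by (auto simp: F_def heavy_def)
    with c \<open>finite F\<close> show "real (anchor_count \<alpha> (c / 2 ^ j)) * (4 * c / 2 ^ j) powr p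
        \<le> (\<Sum>i\<in>F. 4 powr p * 8 * sig \<alpha> i * (if c / 2 ^ j < 4 * sig \<alpha> i then (c / 2 ^ j) powr (p - 1) else 0))"
      using anchor_count_level_le[of "c / 2 ^ j" F \<alpha> p] by simp
  qed
  also have "\<dots> = (\<Sum>i\<in>F. 4 powr p * 8 * sig \<alpha> i *
      (\<Sum>j<J. if c / 2 ^ j < 4 * sig \<alpha> i then (c / 2 ^ j) powr (p - 1) else 0))"
    by (simp add: sum.swap[of _ F] sum_distrib_left)
  also have "\<dots> \<le> (\<Sum>i\<in>F. K * sig \<alpha> i powr p)"
  proof (rule sum_mono)
    fix i assume "i \<in> F"
    moreover have "0 < c / 2 ^ J" using c by simp
    ultimately have "0 < sig \<alpha> i" by (auto simp: F_def heavy_def)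
    then show "4 powr p * 8 * sig \<alpha> i *
        (\<Sum>j<J. if c / 2 ^ j < 4 * sig \<alpha> i then (c / 2 ^ j) powr (p - 1) else 0) \<le> K * sig \<alpha> i powr p"
      unfolding K_def by (rule dyadic_level_sum_le[OF p c])
  qed
  also have "\<dots> \<le> K * (\<Sum>m. sig \<alpha> m powr p)"
    using \<open>finite F\<close> sm level_const_pos[OF p]
    by (simp add: K_def sum_le_suminf flip: sum_distrib_left)
  finally show ?thesis by (simp add: K_def)
qed

lemma le_suminf_powr_root:
  fixes x :: "nat \<Rightarrow> real"
  assumes "0 < p" and "summable (\<lambda>m. x m powr p)" and "\<And>m. 0 \<le> x m"
  shows "x i \<le> (\<Sum>m. x m powr p) powr (1 / p)"
proof -
  have "x i powr p \<le> (\<Sum>m. x m powr p)"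
    using sum_le_suminf[OF assms(2), of "{i}"] by simp
  then have "(x i powr p) powr (1 / p) \<le> (\<Sum>m. x m powr p) powr (1 / p)"
    using assms(1) by (intro powr_mono2) auto
  then show ?thesis
    using assms(1,3) by (simp add: powr_powr)
qed

lemma approx_num_R_op_bounded:
  assumes "\<alpha> \<in> l2" and "\<And>i. sig \<alpha> i \<le> s"
  shows "approx_num (R_op \<alpha>) n \<le> ereal (8 * s + 2)"
proof -
  have "0 \<le> s" using sig_nonneg[of \<alpha> 0] assms(2)[of 0] by (rule order.trans)
  have "\<not> heavy \<alpha> (4 * s + 1) i" for i
    using assms(2)[of i] by (simp add: heavy_def)
  then have none_heavy: "{i. heavy \<alpha> (4 * s + 1) i} = {}" by simp
  have "approx_num (R_op \<alpha>) n \<le> ereal (2 * (4 * s + 1))"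
    using \<open>0 \<le> s\<close> by (intro approx_num_R_op_le[OF assms(1)]) (simp_all add: none_heavy anchor_count_def)
  then show ?thesis by simp
qed

lemma approx_num_R_op_powr_summable:
  assumes p: "1 < p" and \<alpha>: "\<alpha> \<in> l2" and sm: "summable (\<lambda>m. sig \<alpha> m powr p)"
  shows "\<bar>approx_num (R_op \<alpha>) n\<bar> \<noteq> \<infinity>"
    and "summable (\<lambda>n. real_of_ereal (approx_num (R_op \<alpha>) n) powr p)"
    and "(\<Sum>n. real_of_ereal (approx_num (R_op \<alpha>) n) powr p) \<le> level_const p * (\<Sum>m. sig \<alpha> m powr p)"
proof -
  have "0 < p" using p by simp
  define c where "c = 2 * (\<Sum>m. sig \<alpha> m powr p) powr (1/p) + 1/2"
  define a where "a n = real_of_ereal (approx_num (R_op \<alpha>) n)" for n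
  have "0 < c" unfolding c_def by (simp add: add_nonneg_pos)
  have bounded: "approx_num (R_op \<alpha>) n \<le> ereal (4 * c)" for n
    using approx_num_R_op_bounded[OF \<alpha> le_suminf_powr_root[OF \<open>0 < p\<close> sm sig_nonneg]]
    by (simp add: c_def)
  show "\<bar>approx_num (R_op \<alpha>) n\<bar> \<noteq> \<infinity>"
    using approx_num_nonneg[of "R_op \<alpha>" n] bounded[of n] by auto
  have a: "0 \<le> a n" "a n \<le> 4 * c" for n
    using approx_num_nonneg[of "R_op \<alpha>" n] bounded[of n] unfolding a_def
    by (cases "approx_num (R_op \<alpha>) n"; simp)+
  have level: "a n \<le> 2 * t" if "0 < t" "anchor_count \<alpha> t \<le> n" for t n
    using approx_num_R_op_le[OF \<alpha> that(1) heavy_finite[OF \<open>0 < p\<close> sm that(1)] that(2)]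
      approx_num_nonneg[of "R_op \<alpha>" n] unfolding a_def by (cases "approx_num (R_op \<alpha>) n") auto
  have "(\<Sum>j<J. real (anchor_count \<alpha> (c / 2 ^ j)) * (4 * c / 2 ^ j) powr p)
      \<le> level_const p * (\<Sum>m. sig \<alpha> m powr p)" for J
    by (rule sum_anchor_count_levels_le[OF p sm \<open>0 < c\<close>])
  then show "summable (\<lambda>n. real_of_ereal (approx_num (R_op \<alpha>) n) powr p)"
    and "(\<Sum>n. real_of_ereal (approx_num (R_op \<alpha>) n) powr p) \<le> level_const p * (\<Sum>m. sig \<alpha> m powr p)"
    using summable_powr_le_levels[where f = a and N = "anchor_count \<alpha>", OF \<open>0 < p\<close> \<open>0 < c\<close> a level]
    unfolding a_def by blast+
qed

theorem theorem5p7: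
  fixes p :: real
  assumes "1 < p"
  shows "\<exists>C>0. \<forall>\<alpha>\<in>l2. summable (\<lambda>m. \<bar>sig \<alpha> m\<bar> powr p) \<longrightarrow>
           (\<forall>n. \<bar>approx_num (R_op \<alpha>) n\<bar> \<noteq> \<infinity>) \<and>
           summable (\<lambda>n. real_of_ereal (approx_num (R_op \<alpha>) n) powr p) \<and>
           (\<Sum>n. real_of_ereal (approx_num (R_op \<alpha>) n) powr p) powr (1/p)
             \<le> C * (\<Sum>m. \<bar>sig \<alpha> m\<bar> powr p) powr (1/p)"
proof (intro exI[of _ "level_const p powr (1/p)"] conjI ballI impI allI)
  show "0 < level_const p powr (1/p)" using level_const_pos[OF assms] by simp
  fix \<alpha> assume \<alpha>: "\<alpha> \<in> l2" and "summable (\<lambda>m. \<bar>sig \<alpha> m\<bar> powr p)"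
  then have sm: "summable (\<lambda>m. sig \<alpha> m powr p)" by (simp add: abs_of_nonneg sig_nonneg)
  note approx = approx_num_R_op_powr_summable[OF assms \<alpha> sm]
  show "\<bar>approx_num (R_op \<alpha>) n\<bar> \<noteq> \<infinity>" for n by (rule approx(1))
  show "summable (\<lambda>n. real_of_ereal (approx_num (R_op \<alpha>) n) powr p)" by (rule approx(2))
  have "(\<Sum>n. real_of_ereal (approx_num (R_op \<alpha>) n) powr p) powr (1/p)
      \<le> (level_const p * (\<Sum>m. sig \<alpha> m powr p)) powr (1/p)"
    using approx(2,3) assms by (intro powr_mono2 suminf_nonneg) auto
  also have "\<dots> = level_const p powr (1/p) * (\<Sum>m. \<bar>sig \<alpha> m\<bar> powr p) powr (1/p)"
    using level_const_pos[OF assms] sm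
    by (simp add: powr_mult suminf_nonneg abs_of_nonneg sig_nonneg)
  finally show "(\<Sum>n. real_of_ereal (approx_num (R_op \<alpha>) n) powr p) powr (1/p)
      \<le> level_const p powr (1/p) * (\<Sum>m. \<bar>sig \<alpha> m\<bar> powr p) powr (1/p)" .
qed

end
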